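(* For every $0<R<\frac12\sqrt{\frac{3}{8\pi}}$ the map $T$ sends $\mathcal{C}^0_R$ into $\mathcal{C}^0_R$.
   Context: Let $\rho_*(R)=\frac{16\pi}{3}R^2$ and $\mathcal{C}^0_R=\{(m,\rho):[0,R]\to\mathbb{R}^2 \text{ continuous}:\ 0\le m(r)\le \frac{4\pi}{3}\rho_*(R)r^3,\ 0\le\rho(r)\le\rho_*(R)\}$. Define $T[m,\rho]=(M[\rho],P[m,\rho])$ with $M[\rho](r)=\int_0^r 4\pi s^2\rho(s)\,ds$ and $P[m,\rho](r)=\int_r^R \frac{1+2\rho(s)}{1-\frac{8\pi}{3}s^2-\frac{2m(s)}{s}}\,\frac{4\pi s}{3}\Big[1+3\rho(s)+\frac{3m(s)}{4\pi s^3}\Big]ds$. *)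

theory Defs
  imports "HOL-Analysis.Analysis"
begin

definition rho_star :: "real \<Rightarrow> real" where
  "rho_star R = 16 * pi / 3 * R^2"

definition C0 :: "real \<Rightarrow> ((real \<Rightarrow> real) \<times> (real \<Rightarrow> real)) set" where
  "C0 R = {(m, rho). continuous_on {0..R} m \<and> continuous_on {0..R} rho \<and>
     (\<forall>r\<in>{0..R}. 0 \<le> m r \<and> m r \<le> 4 * pi / 3 * rho_star R * r^3 \<and>
                  0 \<le> rho r \<and> rho r \<le> rho_star R)}"

definition M_op :: "(real \<Rightarrow> real) \<Rightarrow> real \<Rightarrow> real" where
  "M_op rho r = integral {0..r} (\<lambda>s. 4 * pi * s^2 * rho s)"

definition P_op :: "real \<Rightarrow> (real \<Rightarrow> real) \<Rightarrow> (real \<Rightarrow> real) \<Rightarrow> real \<Rightarrow> real" where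
  "P_op R m rho r = integral {r..R} (\<lambda>s.
      (1 + 2 * rho s) / (1 - 8 * pi / 3 * s^2 - 2 * m s / s) *
      (4 * pi * s / 3) * (1 + 3 * rho s + 3 * m s / (4 * pi * s^3)))"

definition T_op :: "real \<Rightarrow> (real \<Rightarrow> real) \<times> (real \<Rightarrow> real) \<Rightarrow> (real \<Rightarrow> real) \<times> (real \<Rightarrow> real)" where
  "T_op R mr = (M_op (snd mr), P_op R (fst mr) (snd mr))"

end

theory Submission imports Defs begin

text \<open>
  With \<open>x = 8\<pi>R\<^sup>2/3 < 1/4\<close> one has \<open>\<rho>\<^sub>* = 2x\<close>. The bound on \<open>M\<close> is
  the integral of \<open>4\<pi>s\<^sup>2\<rho>\<^sub>*\<close>. For \<open>P\<close>, the bound \<open>m(s) \<le> (4\<pi>/3)\<rho>\<^sub>*s\<^sup>3\<close>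
  makes \<open>m(s)/s\<close> and \<open>m(s)/s\<^sup>2\<close> vanish continuously at \<open>0\<close> and keeps the
  denominator above \<open>1 - t\<close> with \<open>t = (8\<pi>/3)(1+\<rho>\<^sub>*)s\<^sup>2 \<le> 3/8\<close>. Hence the
  integrand is continuous, nonnegative and at most \<open>c s (1 + 8t/5)\<close>, whose
  integral over \<open>[0,R]\<close> is a polynomial in \<open>x\<close> bounded by \<open>2x\<close>.
\<close>

lemma divide_power_le:
  fixes s y C :: real
  assumes "0 \<le> s" "y \<le> C * s^(n+j)" "0 \<le> C"
  shows "y / s^n \<le> C * s^j"
proof (cases "s = 0")
  case False
  then have "y / s^n \<le> C * s^(n+j) / s^n"
    using assms by (intro divide_right_mono) auto
  also have "\<dots> = C * s^j"
    using False by (simp add: power_add)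
  finally show ?thesis .
qed (use assms in \<open>cases "n = 0"; simp add: zero_power\<close>)

lemma continuous_on_divide_power_vanishing:
  fixes m :: "real \<Rightarrow> real"
  assumes cm: "continuous_on {0..R} m" and n: "n \<ge> 1"
    and bound: "\<And>s. s \<in> {0..R} \<Longrightarrow> \<bar>m s\<bar> \<le> K * s^(n+1)"
  shows "continuous_on {0..R} (\<lambda>s. m s / s^n)"
  unfolding continuous_on_eq_continuous_within
proof
  fix x assume x: "x \<in> {0..R}"
  show "continuous (at x within {0..R}) (\<lambda>s. m s / s^n)"
  proof (cases "x = 0")
    case True
    have "((\<lambda>s. m s / s^n) \<longlongrightarrow> 0) (at 0 within {0..R})"
    proof (rule Lim_null_comparison)
      show "\<forall>\<^sub>F s in at 0 within {0..R}. norm (m s / s^n) \<le> K * \<bar>s\<bar>"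
        unfolding eventually_at_filter
      proof (intro always_eventually allI impI)
        fix s assume "s \<noteq> 0" "s \<in> {0..R}"
        then have "s > 0" by auto
        have "norm (m s / s^n) = \<bar>m s\<bar> / s^n"
          using \<open>s > 0\<close> by (simp add: abs_divide)
        also have "\<dots> \<le> K * s^(n+1) / s^n"
          using bound[OF \<open>s \<in> _\<close>] \<open>s > 0\<close> by (intro divide_right_mono) auto
        also have "\<dots> = K * \<bar>s\<bar>"
          using \<open>s > 0\<close> by (simp add: field_simps)
        finally show "norm (m s / s^n) \<le> K * \<bar>s\<bar>" .
      qed
      show "((\<lambda>s. K * \<bar>s\<bar>) \<longlongrightarrow> 0) (at 0 within {0..R})"
        by (auto intro!: tendsto_eq_intros)
    qed
    moreover have "m 0 / (0::real) ^ n = 0"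
      using n by (simp add: zero_power)
    ultimately show ?thesis
      unfolding continuous_within True by metis
  next
    case False
    have "continuous (at x within {0..R}) m"
      using cm x by (simp add: continuous_on_eq_continuous_within)
    then show ?thesis
      using False by (intro continuous_intros) auto
  qed
qed

lemma inverse_one_minus_le:
  fixes t :: real
  assumes "0 \<le> t" "t \<le> 3/8"
  shows "1 / (1 - t) \<le> 1 + 8/5 * t"
proof -
  have "t * t \<le> 3/8 * t"
    using assms by (intro mult_right_mono) auto
  then have "1 \<le> (1 + 8/5 * t) * (1 - t)"
    by (simp add: algebra_simps)
  then show ?thesis
    using assms by (simp add: divide_le_eq)
qed

lemma has_integral_odd_cubic:
  fixes a1 a3 R :: real
  assumes "0 \<le> R"
  shows "((\<lambda>s. a1 * s + a3 * s^3) has_integral (a1 * R^2/2 + a3 * R^4/4)) {0..R}"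
proof -
  have "((\<lambda>s. a1 * s + a3 * s^3) has_integral
      ((\<lambda>s. a1 * s^2/2 + a3 * s^4/4) R - (\<lambda>s. a1 * s^2/2 + a3 * s^4/4) 0)) {0..R}"
    using assms
    by (intro fundamental_theorem_of_calculus)
      (auto intro!: derivative_eq_intros
        simp: has_real_derivative_iff_has_vector_derivative[symmetric])
  then show ?thesis by simp
qed

lemma quartic_bound:
  fixes x :: real
  assumes "0 < x" "x < 1/4"
  shows "(1 + 4*x) * (1 + 8*x) * (x/4) * (1 + 4/5 * (x * (1 + 2*x))) \<le> 2*x"
proof -
  have "x * (1 + 2*x) \<le> 1/4 * (3/2)"
    using assms by (intro mult_mono) auto
  then have "(1 + 4*x) * (1 + 8*x) * (1 + 4/5 * (x * (1 + 2*x))) \<le> 2 * 3 * (13/10)"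
    using assms by (intro mult_mono) (auto intro: mult_nonneg_nonneg)
  then have "(1 + 4*x) * (1 + 8*x) * (1 + 4/5 * (x * (1 + 2*x))) * (x/4) \<le> 2 * 3 * (13/10) * (x/4)"
    using assms by (intro mult_right_mono) auto
  then have "(1 + 4*x) * (1 + 8*x) * (1 + 4/5 * (x * (1 + 2*x))) * (x/4) \<le> 2*x"
    using assms by linarith
  then show ?thesis
    by (simp add: ac_simps)
qed

lemma M_op_continuous_bounded:
  assumes cont: "continuous_on {0..R} rho"
    and bounds: "\<And>s. s \<in> {0..R} \<Longrightarrow> 0 \<le> rho s \<and> rho s \<le> k"
  shows "continuous_on {0..R} (M_op rho)"
    and "r \<in> {0..R} \<Longrightarrow> 0 \<le> M_op rho r \<and> M_op rho r \<le> 4 * pi / 3 * k * r^3"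
proof -
  define q where "q s = 4 * pi * s^2 * rho s" for s
  have M_eq: "M_op rho = (\<lambda>r. integral {0..r} q)"
    unfolding M_op_def q_def ..
  have q_int: "q integrable_on {0..R}"
    unfolding q_def using cont by (intro integrable_continuous_real continuous_intros)
  show "continuous_on {0..R} (M_op rho)"
    unfolding M_eq using q_int by (rule indefinite_integral_continuous_1)
  assume r: "r \<in> {0..R}"
  have q_int_r: "q integrable_on {0..r}"
    using q_int r integrable_on_subinterval by fastforce
  have "((\<lambda>s. 4 * pi * k * s^2) has_integral
      ((\<lambda>s. 4 * pi / 3 * k * s^3) r - (\<lambda>s. 4 * pi / 3 * k * s^3) 0)) {0..r}"
    using r
    by (intro fundamental_theorem_of_calculus)
      (auto intro!: derivative_eq_intros
        simp: has_real_derivative_iff_has_vector_derivative[symmetric])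
  then have majorant: "((\<lambda>s. 4 * pi * k * s^2) has_integral 4 * pi / 3 * k * r^3) {0..r}"
    by simp
  have "integral {0..r} q \<le> 4 * pi / 3 * k * r^3"
  proof (rule has_integral_le[OF integrable_integral[OF q_int_r] majorant])
    fix s assume "s \<in> {0..r}"
    then have "4 * pi * s^2 * rho s \<le> 4 * pi * s^2 * k"
      using bounds r by (intro mult_left_mono) auto
    then show "q s \<le> 4 * pi * k * s^2"
      unfolding q_def by (simp add: algebra_simps)
  qed
  moreover have "0 \<le> integral {0..r} q"
    using q_int_r bounds r by (intro integral_nonneg) (auto simp: q_def)
  ultimately show "0 \<le> M_op rho r \<and> M_op rho r \<le> 4 * pi / 3 * k * r^3"
    unfolding M_eq by simp
qed

text \<open>The integrand of \<open>P_op\<close> with the factor \<open>s\<close> multiplied in, so that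
  \<open>m(s)/s\<close> and \<open>m(s)/s\<^sup>2\<close> appear; at \<open>s = 0\<close> both forms equal \<open>0\<close>.\<close>

definition P_integrand :: "(real \<Rightarrow> real) \<Rightarrow> (real \<Rightarrow> real) \<Rightarrow> real \<Rightarrow> real" where
  "P_integrand m rho s =
     (1 + 2 * rho s) / (1 - 8 * pi / 3 * s^2 - 2 * (m s / s)) *
     (4 * pi * s / 3 * (1 + 3 * rho s) + m s / s^2)"

lemma P_op_eq_integral_P_integrand: "P_op R m rho r = integral {r..R} (P_integrand m rho)"
proof -
  have "(1 + 2 * rho s) / (1 - 8 * pi / 3 * s^2 - 2 * m s / s) *
      (4 * pi * s / 3) * (1 + 3 * rho s + 3 * m s / (4 * pi * s^3)) = P_integrand m rho s" for s
  proof (cases "s = 0")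
    case False
    then have factor: "4 * pi * s / 3 * (1 + 3 * rho s + 3 * m s / (4 * pi * s^3)) =
        4 * pi * s / 3 * (1 + 3 * rho s) + m s / s^2"
      by (simp add: field_simps power3_eq_cube power2_eq_square)
    have denominator: "2 * m s / s = 2 * (m s / s)"
      by simp
    show ?thesis
      unfolding P_integrand_def denominator by (simp only: mult.assoc[of "(1 + 2 * rho s) / _"] factor)
  qed (simp add: P_integrand_def)
  then show ?thesis
    unfolding P_op_def by presburger
qed

lemma rho_star_pos: "0 < R \<Longrightarrow> 0 < rho_star R"
  by (simp add: rho_star_def)

lemma C0_pointwise_bounds:
  assumes "(m, rho) \<in> C0 R" "s \<in> {0..R}"
  shows "0 \<le> m s" "m s \<le> 4 * pi / 3 * rho_star R * s^3" "0 \<le> rho s" "rho s \<le> rho_star R"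
  using assms by (auto simp: C0_def)

context
  fixes R :: real and m rho :: "real \<Rightarrow> real"
  assumes R_pos: "0 < R"
    and R_small: "8 * pi / 3 * R^2 < 1/4"
    and mem_C0: "(m, rho) \<in> C0 R"
begin

lemma mass_quotient_bounds:
  assumes s: "s \<in> {0..R}"
  shows "m s / s \<le> 4 * pi / 3 * rho_star R * s^2"
    and "0 \<le> m s / s^2" "m s / s^2 \<le> 4 * pi / 3 * rho_star R * s"
  using divide_power_le[of s "m s" "4 * pi / 3 * rho_star R" 1 2]
    divide_power_le[of s "m s" "4 * pi / 3 * rho_star R" 2 1]
    C0_pointwise_bounds[OF mem_C0 s] s rho_star_pos[OF R_pos]
  by (auto simp: numeral_eq_Suc)

lemma denominator_bounds:
  assumes s: "s \<in> {0..R}"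
  shows "1 - 8 * pi / 3 * (1 + rho_star R) * s^2 \<le> 1 - 8 * pi / 3 * s^2 - 2 * (m s / s)"
    and "8 * pi / 3 * (1 + rho_star R) * s^2 \<le> 3/8"
proof -
  show "1 - 8 * pi / 3 * (1 + rho_star R) * s^2 \<le> 1 - 8 * pi / 3 * s^2 - 2 * (m s / s)"
  proof -
    have "8 * pi / 3 * (1 + rho_star R) * s^2 =
        8 * pi / 3 * s^2 + 2 * (4 * pi / 3 * rho_star R * s^2)"
      by (simp add: algebra_simps)
    then show ?thesis
      using mass_quotient_bounds(1)[OF s] by linarith
  qed
  define x where "x = 8 * pi / 3 * R^2"
  have "x * (1 + 2 * x) \<le> 1/4 * (3/2)"
    using R_small by (intro mult_mono) (auto simp: x_def)
  then have "8 * pi / 3 * (1 + rho_star R) * R^2 \<le> 3/8"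
    by (simp add: x_def rho_star_def algebra_simps)
  moreover have "8 * pi / 3 * (1 + rho_star R) * s^2 \<le> 8 * pi / 3 * (1 + rho_star R) * R^2"
    using s rho_star_pos[OF R_pos] by (intro mult_left_mono power_mono) auto
  ultimately show "8 * pi / 3 * (1 + rho_star R) * s^2 \<le> 3/8"
    by linarith
qed

lemma denominator_pos:
  "s \<in> {0..R} \<Longrightarrow> 0 < 1 - 8 * pi / 3 * s^2 - 2 * (m s / s)"
  using denominator_bounds by fastforce

lemma continuous_on_P_integrand: "continuous_on {0..R} (P_integrand m rho)"
proof -
  have cm: "continuous_on {0..R} m" and crho: "continuous_on {0..R} rho"
    using mem_C0 by (auto simp: C0_def)
  have bound: "\<bar>m s\<bar> \<le> 4 * pi / 3 * rho_star R * R * s^(1+1)" if s: "s \<in> {0..R}" for s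
  proof -
    have "\<bar>m s\<bar> \<le> 4 * pi / 3 * rho_star R * s^2 * s"
      using C0_pointwise_bounds[OF mem_C0 s] by (simp add: power3_eq_cube power2_eq_square)
    also have "\<dots> \<le> 4 * pi / 3 * rho_star R * s^2 * R"
      using s rho_star_pos[OF R_pos] by (intro mult_left_mono) auto
    finally show ?thesis by (simp add: power2_eq_square ac_simps)
  qed
  have "continuous_on {0..R} (\<lambda>s. m s / s^1)"
    by (rule continuous_on_divide_power_vanishing[OF cm _ bound]) simp
  then have cD: "continuous_on {0..R} (\<lambda>s. 1 - 8 * pi / 3 * s^2 - 2 * (m s / s))"
    by (intro continuous_on_diff[OF _ continuous_on_mult[OF continuous_on_const]])
      (auto intro!: continuous_intros)
  have c2: "continuous_on {0..R} (\<lambda>s. m s / s^2)"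
    using C0_pointwise_bounds[OF mem_C0] rho_star_pos[OF R_pos]
    by (intro continuous_on_divide_power_vanishing[OF cm, of 2 "4 * pi / 3 * rho_star R"]) auto
  have c_quot: "continuous_on {0..R} (\<lambda>s. (1 + 2 * rho s) / (1 - 8 * pi / 3 * s^2 - 2 * (m s / s)))"
  proof (rule continuous_on_divide[OF _ cD])
    show "continuous_on {0..R} (\<lambda>s. 1 + 2 * rho s)"
      using crho by (intro continuous_intros)
    show "\<forall>s\<in>{0..R}. 1 - 8 * pi / 3 * s^2 - 2 * (m s / s) \<noteq> 0"
      using denominator_pos by (metis order_less_irrefl)
  qed
  show ?thesis
    unfolding P_integrand_def
    by (rule continuous_on_mult[OF c_quot continuous_on_add[OF _ c2]])
      (use crho in \<open>auto intro!: continuous_intros\<close>)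
qed

lemma P_integrand_nonneg:
  assumes s: "s \<in> {0..R}"
  shows "0 \<le> P_integrand m rho s"
proof -
  have "0 \<le> (1 + 2 * rho s) / (1 - 8 * pi / 3 * s^2 - 2 * (m s / s))"
    using C0_pointwise_bounds(3)[OF mem_C0 s] denominator_pos[OF s] by simp
  moreover have "0 \<le> 4 * pi * s / 3 * (1 + 3 * rho s) + m s / s^2"
    using C0_pointwise_bounds(3)[OF mem_C0 s] mass_quotient_bounds(2)[OF s] s by simp
  ultimately show ?thesis
    unfolding P_integrand_def by (rule mult_nonneg_nonneg)
qed

lemma P_integrand_le:
  assumes s: "s \<in> {0..R}"
  shows "P_integrand m rho s \<le>
    (1 + 2 * rho_star R) * (4 * pi / 3 * (1 + 4 * rho_star R)) * s *
    (1 + 8/5 * (8 * pi / 3 * (1 + rho_star R) * s^2))"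
proof -
  define t where "t = 8 * pi / 3 * (1 + rho_star R) * s^2"
  have t: "0 \<le> t" "t \<le> 3/8"
    using denominator_bounds(2)[OF s] rho_star_pos[OF R_pos] by (auto simp: t_def)
  have "1 / (1 - 8 * pi / 3 * s^2 - 2 * (m s / s)) \<le> 1 / (1 - t)"
    using denominator_bounds[OF s] t by (intro divide_left_mono) (auto simp: t_def)
  also have "\<dots> \<le> 1 + 8/5 * t"
    using t by (rule inverse_one_minus_le)
  finally have inv_le: "1 / (1 - 8 * pi / 3 * s^2 - 2 * (m s / s)) \<le> 1 + 8/5 * t" .
  have rho_term: "4 * pi * s / 3 * (1 + 3 * rho s) \<le> 4 * pi * s / 3 * (1 + 3 * rho_star R)"
    using C0_pointwise_bounds[OF mem_C0 s] s by (intro mult_left_mono) auto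
  have num_le: "4 * pi * s / 3 * (1 + 3 * rho s) + m s / s^2 \<le>
      4 * pi / 3 * (1 + 4 * rho_star R) * s"
  proof -
    have "4 * pi / 3 * (1 + 4 * rho_star R) * s =
        4 * pi * s / 3 * (1 + 3 * rho_star R) + 4 * pi / 3 * rho_star R * s"
      by (simp add: algebra_simps)
    then show ?thesis
      using mass_quotient_bounds(3)[OF s] rho_term by linarith
  qed
  have "P_integrand m rho s =
      (1 + 2 * rho s) * (1 / (1 - 8 * pi / 3 * s^2 - 2 * (m s / s))) *
      (4 * pi * s / 3 * (1 + 3 * rho s) + m s / s^2)"
    by (simp add: P_integrand_def)
  also have "\<dots> \<le> (1 + 2 * rho_star R) * (1 + 8/5 * t) * (4 * pi / 3 * (1 + 4 * rho_star R) * s)"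
    using C0_pointwise_bounds[OF mem_C0 s] mass_quotient_bounds(2)[OF s] denominator_pos[OF s]
      inv_le num_le s t
    by (intro mult_mono) (auto intro!: mult_nonneg_nonneg add_nonneg_nonneg)
  finally show ?thesis
    by (simp add: t_def ac_simps)
qed

lemma P_op_continuous_bounded:
  shows "continuous_on {0..R} (P_op R m rho)"
    and "r \<in> {0..R} \<Longrightarrow> 0 \<le> P_op R m rho r \<and> P_op R m rho r \<le> rho_star R"
proof -
  have F_int: "P_integrand m rho integrable_on {0..R}"
    using continuous_on_P_integrand by (rule integrable_continuous_real)
  show "continuous_on {0..R} (P_op R m rho)"
    unfolding P_op_eq_integral_P_integrand
    using F_int by (rule indefinite_integral_continuous_1')
  define c where "c = (1 + 2 * rho_star R) * (4 * pi / 3 * (1 + 4 * rho_star R))"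
  define a where "a = 8 * pi / 3 * (1 + rho_star R)"
  define g where "g s = c * s * (1 + 8/5 * (a * s^2))" for s
  have g_eq: "g = (\<lambda>s. c * s + c * 8/5 * a * s^3)"
    by (simp add: fun_eq_iff g_def algebra_simps power3_eq_cube power2_eq_square)
  have g_int: "(g has_integral (c * R^2/2 + c * 8/5 * a * R^4/4)) {0..R}"
    unfolding g_eq by (rule has_integral_odd_cubic) (use R_pos in simp)
  have F_le_g: "P_integrand m rho s \<le> g s" if "s \<in> {0..R}" for s
    unfolding g_def c_def a_def using P_integrand_le[OF that] .
  have g_total: "c * R^2/2 + c * 8/5 * a * R^4/4 \<le> rho_star R"
  proof -
    define x where "x = 8 * pi / 3 * R^2"
    have "c * R^2/2 + c * 8/5 * a * R^4/4 = (1 + 4*x) * (1 + 8*x) * (x/4) * (1 + 4/5 * (x * (1 + 2*x)))"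
      by (simp add: c_def a_def x_def rho_star_def field_simps power2_eq_square power4_eq_xxxx)
    also have "\<dots> \<le> 2*x"
      using R_pos R_small by (intro quartic_bound) (auto simp: x_def)
    finally show ?thesis
      by (simp add: x_def rho_star_def)
  qed
  assume r: "r \<in> {0..R}"
  have sub: "{r..R} \<subseteq> {0..R}"
    using r by auto
  have F_int_r: "P_integrand m rho integrable_on {r..R}"
    using integrable_on_subinterval[OF F_int sub] .
  have g_int_r: "g integrable_on {r..R}"
    using integrable_on_subinterval[OF has_integral_integrable[OF g_int] sub] .
  have g_nonneg: "0 \<le> g s" if "s \<in> {0..R}" for s
    using F_le_g[OF that] P_integrand_nonneg[OF that] by linarith
  have "integral {r..R} (P_integrand m rho) \<le> integral {r..R} g"
    using F_int_r g_int_r F_le_g sub by (intro integral_le) auto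
  also have "\<dots> \<le> integral {0..R} g"
    by (rule integral_subset_le[OF sub g_int_r has_integral_integrable[OF g_int]])
      (use g_nonneg in blast)
  also have "\<dots> = c * R^2/2 + c * 8/5 * a * R^4/4"
    using g_int by (rule integral_unique)
  finally have "integral {r..R} (P_integrand m rho) \<le> rho_star R"
    using g_total by linarith
  moreover have "0 \<le> integral {r..R} (P_integrand m rho)"
    using F_int_r P_integrand_nonneg sub by (intro integral_nonneg) auto
  ultimately show "0 \<le> P_op R m rho r \<and> P_op R m rho r \<le> rho_star R"
    unfolding P_op_eq_integral_P_integrand by linarith
qed

end

theorem mainTheorem2:
  fixes R :: real and m rho :: "real \<Rightarrow> real"
  assumes "0 < R" and "R < 1/2 * sqrt (3 / (8 * pi))"
    and "(m, rho) \<in> C0 R"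
  shows "T_op R (m, rho) \<in> C0 R"
proof -
  have "R^2 < (1/2 * sqrt (3 / (8 * pi)))^2"
    using assms(1,2) by (intro power_strict_mono) auto
  then have "R^2 < 3 / (32 * pi)"
    by (simp add: power_divide)
  then have R_small: "8 * pi / 3 * R^2 < 1/4"
    by (simp add: field_simps)
  have "continuous_on {0..R} rho" "\<And>s. s \<in> {0..R} \<Longrightarrow> 0 \<le> rho s \<and> rho s \<le> rho_star R"
    using assms(3) by (auto simp: C0_def)
  note M_bounds = M_op_continuous_bounded[OF this]
  note P_bounds = P_op_continuous_bounded[OF assms(1) R_small assms(3)]
  show ?thesis
    unfolding T_op_def C0_def mem_Collect_eq prod.case fst_conv snd_conv
    using M_bounds P_bounds by blast
qed

end
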